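(* Let $T\ge1$ and $N\ge 1$ be integers, and let $\psi_j$, $\eta$, $q_0$ be as in the context. Then $$q_0(1)=\frac{1}{K},\qquad\text{where}\qquad \frac1K=2^{\frac{N-2}{2}}\prod_{j=1}^{\frac{N-2}{2}}(1-\cos\psi_j)\ \text{ ($N$ even)},\qquad \frac1K=2^{\frac{N-3}{2}}\prod_{j=1}^{\frac{N-1}{2}}(1-\cos\psi_j)\ \text{ ($N$ odd)},$$ and the normalized polynomial $q(z)=K\,q_0(z)$ (which satisfies $q(1)=1$) satisfies $q(-1)=P_N$, where $$P_N=\frac{T}{2+(N-1)T}\prod_{j=1}^{\frac{N-2}{2}}\cot^2\frac{\psi_j}{2}\ \text{ ($N$ even)},\qquad P_N=\prod_{j=1}^{\frac{N-1}{2}}\cot^2\frac{\psi_j}{2}\ \text{ ($N$ odd)}.$$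
   Context: Fix integers $T\ge 1$, $N\ge1$. Set $\psi_j=\dfrac{\pi(2+T(2j-1))}{2+(N-1)T}$. Define the polynomial $\eta$ by $\eta(z)=z(z+1)\prod_{j=1}^{\frac{N-2}{2}}(z-e^{i\psi_j})(z-e^{-i\psi_j})$ if $N$ is even, and $\eta(z)=z\prod_{j=1}^{\frac{N-1}{2}}(z-e^{i\psi_j})(z-e^{-i\psi_j})$ if $N$ is odd (empty products equal $1$). Define $$q_0(z)=\frac{T}{2+(N-1)T}\left(\Bigl(\frac1T+N\Bigr)\frac{\eta(z)}{z}-\eta'(z)\right),$$ a polynomial of degree at most $N-1$. *)

theory Defs
  imports "HOL-Analysis.Analysis" "HOL-Computational_Algebra.Polynomial"
begin

definition psi :: "nat \<Rightarrow> nat \<Rightarrow> nat \<Rightarrow> real" where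
  "psi T N j = pi * (2 + real T * (2 * real j - 1)) / (2 + (real N - 1) * real T)"

definition eta :: "nat \<Rightarrow> nat \<Rightarrow> complex poly" where
  "eta T N =
    (if even N then
       [:0, 1:] * [:1, 1:] *
       (\<Prod>j\<in>{1..(N - 2) div 2}.
          [:- cis (psi T N j), 1:] * [:- cis (- psi T N j), 1:])
     else
       [:0, 1:] *
       (\<Prod>j\<in>{1..(N - 1) div 2}.
          [:- cis (psi T N j), 1:] * [:- cis (- psi T N j), 1:]))"

text \<open>eta is divisible by z, so eta div z is the exact quotient eta(z)/z.\<close>
definition q0 :: "nat \<Rightarrow> nat \<Rightarrow> complex poly" where
  "q0 T N = smult (complex_of_real (real T / (2 + (real N - 1) * real T)))
     (smult (complex_of_real (1 / real T + real N)) (eta T N div [:0, 1:]) - pderiv (eta T N))"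

definition invK :: "nat \<Rightarrow> nat \<Rightarrow> real" where
  "invK T N =
    (if even N then 2 powr ((real N - 2) / 2) * (\<Prod>j\<in>{1..(N - 2) div 2}. 1 - cos (psi T N j))
     else 2 powr ((real N - 3) / 2) * (\<Prod>j\<in>{1..(N - 1) div 2}. 1 - cos (psi T N j)))"

definition P_N :: "nat \<Rightarrow> nat \<Rightarrow> real" where
  "P_N T N =
    (if even N then real T / (2 + (real N - 1) * real T) * (\<Prod>j\<in>{1..(N - 2) div 2}. (cot (psi T N j / 2))\<^sup>2)
     else (\<Prod>j\<in>{1..(N - 1) div 2}. (cot (psi T N j / 2))\<^sup>2))"

end

theory Submission
  imports Defs
begin

text \<open>Pairing conjugate roots, \<open>\<eta>(z) = z R(z)\<close> with \<open>R\<close> a product of palindromic quadratics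
  \<open>z\<^sup>2 - 2 cos \<psi>\<^sub>j z + 1\<close> (times \<open>z + 1\<close> when \<open>N\<close> is even). Each such quadratic \<open>f\<close> satisfies
  \<open>f'(1) = f(1)\<close> and \<open>f'(-1) = -f(-1)\<close>, so the logarithmic derivative of \<open>R\<close> at \<open>\<plusminus>1\<close> is
  \<open>\<plusminus>\<close> the number of factors, and \<open>q\<^sub>0(\<plusminus>1)\<close> becomes an explicit multiple of \<open>R(\<plusminus>1)\<close>,
  i.e. of \<open>\<Prod>(1 \<mp> cos \<psi>\<^sub>j)\<close>. The identity \<open>cot\<^sup>2(x/2) = (1 + cos x)/(1 - cos x)\<close>
  then gives \<open>q(-1)\<close>.\<close>

lemma quadratic_factor_cis:
  "[:- cis a, 1:] * [:- cis (- a), 1:] = [:1, - 2 * complex_of_real (cos a), 1:]"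
  by (simp add: cis_mult complex_eq_iff)

lemma poly_pderiv_prod_eq_card_mult:
  fixes f :: "'i \<Rightarrow> 'a::idom poly"
  assumes "finite A" "\<And>j. j \<in> A \<Longrightarrow> poly (pderiv (f j)) x = c * poly (f j) x"
  shows "poly (pderiv (prod f A)) x = of_nat (card A) * c * poly (prod f A) x"
  using assms
proof (induction A rule: finite_induct)
  case empty
  then show ?case by simp
next
  case (insert a F)
  then show ?case by (simp add: pderiv_mult algebra_simps)
qed

definition cos_factor_prod :: "(nat \<Rightarrow> real) \<Rightarrow> nat \<Rightarrow> complex poly" where
  "cos_factor_prod \<theta> M = (\<Prod>j\<in>{1..M}. [:1, - 2 * complex_of_real (cos (\<theta> j)), 1:])"

lemma poly_cos_factor_prod_1:
  "poly (cos_factor_prod \<theta> M) 1 = complex_of_real (2 ^ M * (\<Prod>j\<in>{1..M}. 1 - cos (\<theta> j)))"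
proof -
  have "poly (cos_factor_prod \<theta> M) 1 = complex_of_real (\<Prod>j\<in>{1..M}. 2 - 2 * cos (\<theta> j))"
    unfolding cos_factor_prod_def by (simp add: poly_prod)
  also have "(\<Prod>j\<in>{1..M}. 2 - 2 * cos (\<theta> j)) = (\<Prod>j\<in>{1..M}. 2 * (1 - cos (\<theta> j)))"
    by simp
  also have "\<dots> = 2 ^ M * (\<Prod>j\<in>{1..M}. 1 - cos (\<theta> j))"
    unfolding prod.distrib by simp
  finally show ?thesis .
qed

lemma poly_cos_factor_prod_minus_1:
  "poly (cos_factor_prod \<theta> M) (-1) = complex_of_real (2 ^ M * (\<Prod>j\<in>{1..M}. 1 + cos (\<theta> j)))"
proof -
  have "poly (cos_factor_prod \<theta> M) (-1) = complex_of_real (\<Prod>j\<in>{1..M}. 2 + 2 * cos (\<theta> j))"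
    unfolding cos_factor_prod_def by (simp add: poly_prod)
  also have "(\<Prod>j\<in>{1..M}. 2 + 2 * cos (\<theta> j)) = (\<Prod>j\<in>{1..M}. 2 * (1 + cos (\<theta> j)))"
    by simp
  also have "\<dots> = 2 ^ M * (\<Prod>j\<in>{1..M}. 1 + cos (\<theta> j))"
    unfolding prod.distrib by simp
  finally show ?thesis .
qed

lemma poly_pderiv_cos_factor_prod_1:
  "poly (pderiv (cos_factor_prod \<theta> M)) 1 = of_nat M * poly (cos_factor_prod \<theta> M) 1"
  unfolding cos_factor_prod_def
  by (subst poly_pderiv_prod_eq_card_mult[where c = 1]) (auto simp: pderiv_pCons)

lemma poly_pderiv_cos_factor_prod_minus_1:
  "poly (pderiv (cos_factor_prod \<theta> M)) (-1) = - of_nat M * poly (cos_factor_prod \<theta> M) (-1)"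
  unfolding cos_factor_prod_def
  by (subst poly_pderiv_prod_eq_card_mult[where c = "-1"]) (auto simp: pderiv_pCons)

lemma eta_odd:
  "odd N \<Longrightarrow> eta T N = [:0, 1:] * cos_factor_prod (psi T N) ((N - 1) div 2)"
  unfolding eta_def cos_factor_prod_def by (simp only: quadratic_factor_cis) simp

lemma eta_even:
  "even N \<Longrightarrow> eta T N = [:0, 1:] * ([:1, 1:] * cos_factor_prod (psi T N) ((N - 2) div 2))"
  unfolding eta_def cos_factor_prod_def by (simp only: quadratic_factor_cis) (simp add: mult.assoc)

lemma poly_q0_eq:
  assumes "eta T N = [:0, 1:] * R"
  shows "poly (q0 T N) x = complex_of_real (real T / (2 + (real N - 1) * real T)) *
    (complex_of_real (1 / real T + real N - 1) * poly R x - x * poly (pderiv R) x)"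
proof -
  have "eta T N div [:0, 1:] = R"
    unfolding assms by (rule nonzero_mult_div_cancel_left) simp
  moreover have "pderiv (eta T N) = [:0, 1:] * pderiv R + R"
    unfolding assms by (simp add: pderiv_mult pderiv_pCons)
  ultimately show ?thesis
    unfolding q0_def by (simp add: algebra_simps)
qed

lemma psi_bounds:
  assumes "T \<ge> 1" "j \<ge> 1" "2 * j < N"
  shows "0 < psi T N j" "psi T N j < pi"
proof -
  have den: "2 + (real N - 1) * real T > 0"
    using assms by (intro add_pos_nonneg) auto
  have "2 * real j - 1 < real N - 1"
    using assms by linarith
  then have "real T * (2 * real j - 1) < (real N - 1) * real T"
    using assms by (simp add: mult.commute)
  then show "psi T N j < pi"
    unfolding psi_def using den by (simp add: divide_less_eq)
  have "2 + real T * (2 * real j - 1) > 0"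
    using assms by (intro add_pos_nonneg) auto
  then show "0 < psi T N j"
    unfolding psi_def using den by simp
qed

lemma one_minus_cos_pos: "0 < x \<Longrightarrow> x < pi \<Longrightarrow> 0 < 1 - cos x"
  using cos_monotone_0_pi[of 0 x] by simp

lemma cot_half_squared:
  assumes "0 < x" "x < pi"
  shows "(cot (x / 2))\<^sup>2 = (1 + cos x) / (1 - cos x)"
proof -
  have "sin (x / 2) > 0"
    using assms by (intro sin_gt_zero) auto
  moreover have "1 - cos x = 2 * (sin (x / 2))\<^sup>2" "1 + cos x = 2 * (cos (x / 2))\<^sup>2"
    using cos_double_sin[of "x / 2"] cos_double_cos[of "x / 2"] by simp_all
  ultimately show ?thesis
    by (simp add: cot_def power_divide)
qed

lemma prod_one_minus_cos_psi_pos: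
  "T \<ge> 1 \<Longrightarrow> 2 * M < N \<Longrightarrow> 0 < (\<Prod>j\<in>{1..M}. 1 - cos (psi T N j))"
  by (intro prod_pos one_minus_cos_pos) (auto intro: psi_bounds)

lemma prod_cot_half_psi_squared:
  assumes "T \<ge> 1" "2 * M < N"
  shows "(\<Prod>j\<in>{1..M}. (cot (psi T N j / 2))\<^sup>2)
    = (\<Prod>j\<in>{1..M}. 1 + cos (psi T N j)) / (\<Prod>j\<in>{1..M}. 1 - cos (psi T N j))"
proof -
  have "(\<Prod>j\<in>{1..M}. (cot (psi T N j / 2))\<^sup>2)
      = (\<Prod>j\<in>{1..M}. (1 + cos (psi T N j)) / (1 - cos (psi T N j)))"
    using assms by (intro prod.cong) (auto intro!: cot_half_squared psi_bounds)
  then show ?thesis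
    by (simp add: prod_dividef)
qed

lemma q0_odd:
  assumes "T \<ge> 1" "odd N"
  defines "S \<equiv> cos_factor_prod (psi T N) ((N - 1) div 2)"
  shows "poly (q0 T N) 1 = poly S 1 / 2" "poly (q0 T N) (-1) = poly S (-1) / 2"
proof -
  define M where "M = (N - 1) div 2"
  define c where "c = real T / (2 + (real N - 1) * real T)"
  define a where "a = 1 / real T + real N - 1"
  have "N = 2 * M + 1"
    using assms(2) unfolding M_def by presburger
  then have N: "real N = 2 * real M + 1"
    by simp
  have T: "real T > 0" "1 + real M * real T > 0"
    using assms(1) by (simp_all add: add_pos_nonneg)
  have "a - real M = (1 + real M * real T) / real T"
    using T unfolding a_def N by (simp add: field_simps)
  moreover have "2 + (real N - 1) * real T = 2 * (1 + real M * real T)"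
    unfolding N by (simp add: algebra_simps)
  ultimately have real_scale: "c * (a - real M) = 1 / 2"
    using T unfolding c_def by simp
  have scale: "complex_of_real c * (complex_of_real a - of_nat M) = 1 / 2"
    using arg_cong[OF real_scale, of complex_of_real] by simp
  note q0_eval = poly_q0_eq[OF eta_odd[OF assms(2), of T], folded S_def M_def c_def a_def]
  have "poly (q0 T N) 1 = complex_of_real c * (complex_of_real a - of_nat M) * poly S 1"
    unfolding q0_eval S_def M_def poly_pderiv_cos_factor_prod_1 by (simp add: algebra_simps)
  then show "poly (q0 T N) 1 = poly S 1 / 2"
    by (simp add: scale)
  have "poly (q0 T N) (-1) = complex_of_real c * (complex_of_real a - of_nat M) * poly S (-1)"
    unfolding q0_eval S_def M_def poly_pderiv_cos_factor_prod_minus_1 by (simp add: algebra_simps)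
  then show "poly (q0 T N) (-1) = poly S (-1) / 2"
    by (simp add: scale)
qed

lemma q0_even:
  assumes "T \<ge> 1" "even N" "N \<ge> 1"
  defines "S \<equiv> cos_factor_prod (psi T N) ((N - 2) div 2)"
  shows "poly (q0 T N) 1 = poly S 1"
    "poly (q0 T N) (-1) = complex_of_real (real T / (2 + (real N - 1) * real T)) * poly S (-1)"
proof -
  define M where "M = (N - 2) div 2"
  define c where "c = real T / (2 + (real N - 1) * real T)"
  define a where "a = 1 / real T + real N - 1"
  have "N = 2 * M + 2"
    using assms(2,3) unfolding M_def by presburger
  then have N: "real N = 2 * real M + 2"
    by simp
  have T: "real T > 0" "2 + (real N - 1) * real T > 0"
    using assms(1) unfolding N by (simp_all add: add_pos_nonneg)
  have "2 * a - 2 * real M - 1 = (2 + (real N - 1) * real T) / real T"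
    using T unfolding a_def N by (simp add: field_simps)
  then have real_scale: "c * (2 * a - 2 * real M - 1) = 1"
    using T unfolding c_def by simp
  have scale: "complex_of_real c * (2 * complex_of_real a - 2 * of_nat M - 1) = 1"
    using arg_cong[OF real_scale, of complex_of_real] by simp
  note q0_eval = poly_q0_eq[OF eta_even[OF assms(2), of T], folded S_def M_def c_def a_def]
  have pderiv_R: "pderiv ([:1, 1:] * S) = [:1, 1:] * pderiv S + S"
    unfolding pderiv_mult by (simp add: pderiv_pCons)
  have "poly (q0 T N) 1 = complex_of_real c * (2 * complex_of_real a - 2 * of_nat M - 1) * poly S 1"
    unfolding q0_eval pderiv_R unfolding S_def M_def
    by (simp add: poly_pderiv_cos_factor_prod_1 algebra_simps)
  then show "poly (q0 T N) 1 = poly S 1"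
    by (simp add: scale)
  show "poly (q0 T N) (-1) = complex_of_real c * poly S (-1)"
    unfolding q0_eval pderiv_R by simp
qed

lemma invK_odd:
  assumes "odd N"
  shows "invK T N = 2 ^ ((N - 1) div 2) / 2 * (\<Prod>j\<in>{1..(N - 1) div 2}. 1 - cos (psi T N j))"
proof -
  define M where "M = (N - 1) div 2"
  have "N = 2 * M + 1"
    using assms unfolding M_def by presburger
  then have "(real N - 3) / 2 = real M - 1"
    by simp
  then have "2 powr ((real N - 3) / 2) = 2 powr real M / 2 powr 1"
    by (simp only: powr_diff)
  then have "2 powr ((real N - 3) / 2) = 2 ^ M / 2"
    by (simp add: powr_realpow)
  then show ?thesis
    unfolding invK_def M_def using assms by simp
qed

lemma invK_even:
  assumes "even N" "N \<ge> 1"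
  shows "invK T N = 2 ^ ((N - 2) div 2) * (\<Prod>j\<in>{1..(N - 2) div 2}. 1 - cos (psi T N j))"
proof -
  define M where "M = (N - 2) div 2"
  have "N = 2 * M + 2"
    using assms unfolding M_def by presburger
  then have "(real N - 2) / 2 = real M"
    by simp
  then have "2 powr ((real N - 2) / 2) = 2 ^ M"
    by (simp add: powr_realpow)
  then show ?thesis
    unfolding invK_def M_def using assms by simp
qed

lemma invK_pos:
  assumes "T \<ge> 1" "N \<ge> 1"
  shows "invK T N > 0"
proof (cases "even N")
  case True
  have "2 * ((N - 2) div 2) < N"
    using assms(2) by simp
  from prod_one_minus_cos_psi_pos[OF assms(1) this] show ?thesis
    using assms by (simp add: invK_even True)
next
  case False
  have "2 * ((N - 1) div 2) < N"
    using assms(2) by simp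
  from prod_one_minus_cos_psi_pos[OF assms(1) this] show ?thesis
    by (simp add: invK_odd False)
qed

lemma q0_at_1:
  assumes "T \<ge> 1" "N \<ge> 1"
  shows "poly (q0 T N) 1 = complex_of_real (invK T N)"
proof (cases "even N")
  case True
  then show ?thesis
    using assms by (simp add: q0_even invK_even poly_cos_factor_prod_1)
next
  case False
  then show ?thesis
    using assms by (simp add: q0_odd invK_odd poly_cos_factor_prod_1)
qed

lemma q0_at_minus_1:
  assumes "T \<ge> 1" "N \<ge> 1"
  shows "poly (q0 T N) (-1) = complex_of_real (invK T N * P_N T N)"
proof (cases "even N")
  case True
  define M where "M = (N - 2) div 2"
  define P where "P = (\<Prod>j\<in>{1..M}. 1 - cos (psi T N j))"
  define Q where "Q = (\<Prod>j\<in>{1..M}. 1 + cos (psi T N j))"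
  define c where "c = real T / (2 + (real N - 1) * real T)"
  have "2 * M < N"
    using assms(2) unfolding M_def by simp
  then have pos: "P > 0" and PN: "P_N T N = c * (Q / P)"
    using True prod_one_minus_cos_psi_pos[OF assms(1)] prod_cot_half_psi_squared[OF assms(1)]
    unfolding P_N_def P_def Q_def c_def M_def[symmetric] by simp_all
  have K: "invK T N = 2 ^ M * P"
    using assms True by (simp add: invK_even M_def P_def)
  have invK_P_N: "invK T N * P_N T N = c * (2 ^ M * Q)"
    unfolding K PN using pos by simp
  show ?thesis
    unfolding invK_P_N q0_even(2)[OF assms(1) True assms(2)] poly_cos_factor_prod_minus_1
      c_def Q_def M_def
    by simp
next
  case False
  define M where "M = (N - 1) div 2"
  define P where "P = (\<Prod>j\<in>{1..M}. 1 - cos (psi T N j))"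
  define Q where "Q = (\<Prod>j\<in>{1..M}. 1 + cos (psi T N j))"
  have "2 * M < N"
    using assms(2) unfolding M_def by simp
  then have pos: "P > 0" and PN: "P_N T N = Q / P"
    using False prod_one_minus_cos_psi_pos[OF assms(1)] prod_cot_half_psi_squared[OF assms(1)]
    unfolding P_N_def P_def Q_def M_def[symmetric] by simp_all
  have K: "invK T N = 2 ^ M / 2 * P"
    using False by (simp add: invK_odd M_def P_def)
  have invK_P_N: "invK T N * P_N T N = 2 ^ M * Q / 2"
    unfolding K PN using pos by simp
  show ?thesis
    unfolding invK_P_N q0_odd(2)[OF assms(1) False] poly_cos_factor_prod_minus_1 Q_def M_def
    by simp
qed

theorem mainTheorem3:
  fixes T N :: nat
  assumes "T \<ge> 1" and "N \<ge> 1"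
  shows "poly (q0 T N) 1 = complex_of_real (invK T N)
    \<and> poly (smult (complex_of_real (1 / invK T N)) (q0 T N)) 1 = 1
    \<and> poly (smult (complex_of_real (1 / invK T N)) (q0 T N)) (-1) = complex_of_real (P_N T N)"
  using q0_at_1[OF assms] q0_at_minus_1[OF assms] invK_pos[OF assms] by simp

end
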